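(* Let $M$ be a symmetric homogeneous stable mean having a symmetric asymptotic expansion with coefficients $(a_n)_{n\ge0}$. Then $a_0=1$, $a_1\in\mathbb R$ is arbitrary (free), and for $m\ge2$ $$a_m=\frac{2^{2m-1}}{2^{2m-2}-1}\Big(\frac12\sum_{n=1}^{m-1}a_n\sum_{k=0}^{2m-2n}P[k,2n,\mathbf g]P[2m-2n-k,-2n+1,\mathbf h]+\sum_{n=1}^{m-1}a_n\sum_{k=0}^{m-n}P[k,2n,\mathbf d]P[m-n-k,-2n+1,\mathbf s]\Big),$$ where $\mathbf g=(1,a_1,0,a_2,0,\ldots)$, $\mathbf h=(2,-1,a_1,0,a_2,0,\ldots)$, and $\mathbf d,\mathbf s$ are given by $d_m=-\frac12\sum_{n=0}^m a_n\sum_{k=0}^{2m+1-2n}P[k,2n,\mathbf g]P[2m+1-2n-k,-2n+1,\mathbf h]$ and $s_m=\frac12\sum_{n=0}^m a_n\sum_{k=0}^{2m-2n}P[k,2n,\mathbf g]P[2m-2n-k,-2n+1,\mathbf h]$. In particular all $a_m$, $m\ge2$, are determined by $a_1$ (the right-hand side involves only $a_1,\dots,a_{m-1}$).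
   Context: A bi-variate mean is $M:(0,\infty)^2\to(0,\infty)$ with $\min(s,t)\le M(s,t)\le\max(s,t)$; symmetric: $M(s,t)=M(t,s)$; homogeneous: $M(\lambda s,\lambda t)=\lambda M(s,t)$. $M$ is stable if $M(s,t)=M\big(M(s,M(s,t)),M(M(s,t),t)\big)$ for all $s,t>0$. $M$ has a symmetric asymptotic expansion with coefficients $(a_n)$ if for every fixed real $t$ and every $N\ge0$, $M(x-t,x+t)=\sum_{n=0}^Na_nt^{2n}x^{-2n+1}+o(x^{-2N+1})$ as $x\to\infty$. For a sequence $\mathbf b$ with $b_0\ne0$, $r\in\mathbb R$: $P[0,r,\mathbf b]=b_0^r$, $P[n,r,\mathbf b]=\frac1{nb_0}\sum_{k=1}^n(k(1+r)-n)b_kP[n-k,r,\mathbf b]$ ($n\ge1$), the coefficient of $z^n$ in $(\sum_jb_jz^j)^r$. In $\mathbf g$: $g_0=1$, $g_{2k-1}=a_k$, $g_{2k}=0$; in $\mathbf h$: $h_0=2$, $h_1=-1$, $h_{2k}=a_k$, $h_{2k+1}=0$ ($k\ge1$). *)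

theory Defs
  imports Complex_Main "HOL-Library.Landau_Symbols"
begin

definition is_mean :: "(real \<Rightarrow> real \<Rightarrow> real) \<Rightarrow> bool" where
  "is_mean M \<longleftrightarrow> (\<forall>s>0. \<forall>t>0. min s t \<le> M s t \<and> M s t \<le> max s t)"

definition symmetric_mean :: "(real \<Rightarrow> real \<Rightarrow> real) \<Rightarrow> bool" where
  "symmetric_mean M \<longleftrightarrow> (\<forall>s>0. \<forall>t>0. M s t = M t s)"

definition homogeneous_mean :: "(real \<Rightarrow> real \<Rightarrow> real) \<Rightarrow> bool" where
  "homogeneous_mean M \<longleftrightarrow> (\<forall>c>0. \<forall>s>0. \<forall>t>0. M (c * s) (c * t) = c * M s t)"

definition stable_mean :: "(real \<Rightarrow> real \<Rightarrow> real) \<Rightarrow> bool" where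
  "stable_mean M \<longleftrightarrow> (\<forall>s>0. \<forall>t>0. M s t = M (M s (M s t)) (M (M s t) t))"

definition has_sym_asymp_expansion :: "(real \<Rightarrow> real \<Rightarrow> real) \<Rightarrow> (nat \<Rightarrow> real) \<Rightarrow> bool" where
  "has_sym_asymp_expansion M a \<longleftrightarrow>
     (\<forall>t::real. \<forall>N::nat.
        (\<lambda>x. M (x - t) (x + t) - (\<Sum>n\<le>N. a n * t ^ (2 * n) * x powr (1 - 2 * real n)))
          \<in> o[at_top](\<lambda>x. x powr (1 - 2 * real N)))"

text \<open>P[n,r,b]: coefficient of z^n in (sum_j b_j z^j)^r, via the recursion of the paper.\<close>
function P :: "nat \<Rightarrow> real \<Rightarrow> (nat \<Rightarrow> real) \<Rightarrow> real" where
  "P 0 r b = b 0 powr r"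
| "P (Suc n) r b = (1 / (real (Suc n) * b 0)) *
      (\<Sum>k\<in>{1..Suc n}. (real k * (1 + r) - real (Suc n)) * b k * P (Suc n - k) r b)"
  by pat_completeness auto
termination
  by (relation "measure (\<lambda>(n, _, _). n)") auto

definition seq_g :: "(nat \<Rightarrow> real) \<Rightarrow> nat \<Rightarrow> real" where
  "seq_g a j = (if j = 0 then 1 else if odd j then a ((j + 1) div 2) else 0)"

definition seq_h :: "(nat \<Rightarrow> real) \<Rightarrow> nat \<Rightarrow> real" where
  "seq_h a j = (if j = 0 then 2 else if j = 1 then -1 else if even j then a (j div 2) else 0)"

definition seq_d :: "(nat \<Rightarrow> real) \<Rightarrow> nat \<Rightarrow> real" where
  "seq_d a m = - (1/2) * (\<Sum>n\<le>m. a n * (\<Sum>k\<le>2*m+1-2*n.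
       P k (2 * real n) (seq_g a) * P (2*m+1-2*n-k) (- 2 * real n + 1) (seq_h a)))"

definition seq_s :: "(nat \<Rightarrow> real) \<Rightarrow> nat \<Rightarrow> real" where
  "seq_s a m = (1/2) * (\<Sum>n\<le>m. a n * (\<Sum>k\<le>2*m-2*n.
       P k (2 * real n) (seq_g a) * P (2*m-2*n-k) (- 2 * real n + 1) (seq_h a)))"

end

theory Submission
  imports Defs "HOL-Computational_Algebra.Formal_Power_Series"
begin
unbundle fps_syntax

text \<open>Write \<open>f(v) = M(1 - v, 1 + v)\<close>. Homogeneity turns the expansion at infinity into
  \<open>f(v) \<approx> \<Sum> a\<^sub>n v\<^sup>2\<^sup>n\<close> as \<open>v \<rightarrow> 0\<^sup>+\<close>. More generally, if \<open>p, q > 0\<close> and their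
  half-difference and half-sum have asymptotic power series \<open>D\<close> (with \<open>D(0) = 0 < D'(0)\<close>) and
  \<open>C\<close>, then \<open>M(p, q) = C f(D/C)\<close> has the series \<open>\<Sum> a\<^sub>n D\<^sup>2\<^sup>n C\<^sup>1\<^sup>-\<^sup>2\<^sup>n\<close>.
  This yields the series of the two inner means of the stability identity (the second is the
  first at \<open>-u\<close>) and then, for the outer mean, \<open>a\<^sub>m = \<Sum>\<^sub>n\<^sub>\<le>\<^sub>m a\<^sub>n [X\<^sup>m\<^sup>-\<^sup>n] d\<^sup>2\<^sup>n s\<^sup>1\<^sup>-\<^sup>2\<^sup>n\<close>,
  where \<open>s\<close> and \<open>-d\<close> are the even and odd parts of the inner series, itself a sum of the same
  shape over \<open>g\<close> and \<open>h\<close>. The terms \<open>n = m\<close> of both sums contain \<open>a\<^sub>m\<close>, with factors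
  \<open>2\<^sup>-\<^sup>2\<^sup>m\<close> and \<open>2\<^sup>1\<^sup>-\<^sup>2\<^sup>m\<close>; solving for \<open>a\<^sub>m\<close> gives the recursion. The numbers
  \<^const>\<open>P\<close> are the coefficients of integer powers of a series, since their recursion is the
  coefficient comparison in \<open>B (B\<^sup>r)' = r B\<^sup>r B'\<close>.\<close>

section \<open>Asymptotic power series at \<open>0\<^sup>+\<close>\<close>

definition has_asymp_fps_upto :: "nat \<Rightarrow> (real \<Rightarrow> real) \<Rightarrow> real fps \<Rightarrow> bool" where
  "has_asymp_fps_upto K f F \<longleftrightarrow>
     (\<lambda>u. f u - (\<Sum>k\<le>K. F $ k * u ^ k)) \<in> o[at_right 0](\<lambda>u. u ^ K)"

definition has_asymp_fps :: "(real \<Rightarrow> real) \<Rightarrow> real fps \<Rightarrow> bool" where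
  "has_asymp_fps f F \<longleftrightarrow> (\<forall>K. has_asymp_fps_upto K f F)"

lemma eventually_power_nonzero_at_right_0: "eventually (\<lambda>u::real. u ^ K \<noteq> 0) (at_right 0)"
  using eventually_at_right_less[of 0] by eventually_elim simp

lemma power_smallo_power_at_right_0:
  assumes "K < n"
  shows "(\<lambda>u::real. c * u ^ n) \<in> o[at_right 0](\<lambda>u. u ^ K)"
proof -
  have "((\<lambda>u::real. u ^ (n - K)) \<longlongrightarrow> 0) (at_right 0)"
    using assms by (auto intro!: tendsto_eq_intros)
  moreover have "eventually (\<lambda>u::real. u ^ (n - K) = u ^ n / u ^ K) (at_right 0)"
    using eventually_at_right_less[of 0] by eventually_elim (use assms in \<open>simp add: power_diff\<close>)
  ultimately have "((\<lambda>u::real. u ^ n / u ^ K) \<longlongrightarrow> 0) (at_right 0)"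
    using tendsto_cong by fastforce
  hence "(\<lambda>u::real. u ^ n) \<in> o[at_right 0](\<lambda>u. u ^ K)"
    by (rule smalloI_tendsto[OF _ eventually_power_nonzero_at_right_0])
  thus ?thesis by (cases "c = 0") auto
qed

lemma smallo_power_mono_at_right_0:
  assumes "K \<le> n" "f \<in> o[at_right 0](\<lambda>u::real. u ^ n)"
  shows "f \<in> o[at_right 0](\<lambda>u. u ^ K)"
proof (cases "K = n")
  case False
  hence "(\<lambda>u::real. 1 * u ^ n) \<in> o[at_right 0](\<lambda>u. u ^ K)"
    using assms(1) by (intro power_smallo_power_at_right_0) simp
  thus ?thesis using landau_o.small_trans[OF assms(2)] by simp
qed (use assms in auto)

lemma has_asymp_fps_uptoD:
  "has_asymp_fps f F \<Longrightarrow> (\<lambda>u. f u - (\<Sum>k\<le>K. F $ k * u ^ k)) \<in> o[at_right 0](\<lambda>u. u ^ K)"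
  unfolding has_asymp_fps_def has_asymp_fps_upto_def by blast

lemma has_asymp_fps_upto_cong_coeff:
  assumes "\<And>k. k \<le> K \<Longrightarrow> F $ k = G $ k" "has_asymp_fps_upto K f F"
  shows "has_asymp_fps_upto K f G"
proof -
  have "(\<Sum>k\<le>K. F $ k * u ^ k) = (\<Sum>k\<le>K. G $ k * u ^ k)" for u :: real
    using assms(1) by (intro sum.cong) auto
  thus ?thesis using assms(2) unfolding has_asymp_fps_upto_def by simp
qed

lemma has_asymp_fps_upto_Suc:
  assumes "has_asymp_fps_upto (Suc K) f F"
  shows "has_asymp_fps_upto K f F"
proof -
  have "(\<lambda>u. f u - (\<Sum>k\<le>Suc K. F $ k * u ^ k)) \<in> o[at_right 0](\<lambda>u. u ^ K)"
    using assms unfolding has_asymp_fps_upto_def by (intro smallo_power_mono_at_right_0[of K "Suc K"]) auto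
  hence "(\<lambda>u. (f u - (\<Sum>k\<le>Suc K. F $ k * u ^ k)) + F $ Suc K * u ^ Suc K)
           \<in> o[at_right 0](\<lambda>u. u ^ K)"
    by (rule sum_in_smallo(1)[OF _ power_smallo_power_at_right_0]) simp
  moreover have "(f u - (\<Sum>k\<le>Suc K. F $ k * u ^ k)) + F $ Suc K * u ^ Suc K
                   = f u - (\<Sum>k\<le>K. F $ k * u ^ k)" for u
    by simp
  ultimately show ?thesis unfolding has_asymp_fps_upto_def by simp
qed

lemma has_asymp_fps_upto_mono:
  assumes "has_asymp_fps_upto n f F" "K \<le> n"
  shows "has_asymp_fps_upto K f F"
  using assms(2,1) by (induction rule: dec_induct) (auto intro: has_asymp_fps_upto_Suc)

lemma has_asymp_fps_eventually_cong:
  assumes "eventually (\<lambda>u. f u = g u) (at_right 0)" "has_asymp_fps f F"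
  shows "has_asymp_fps g F"
  unfolding has_asymp_fps_def has_asymp_fps_upto_def
proof
  fix K
  have "eventually (\<lambda>u. f u - (\<Sum>k\<le>K. F $ k * u ^ k) = g u - (\<Sum>k\<le>K. F $ k * u ^ k)) (at_right 0)"
    using assms(1) by eventually_elim simp
  from landau_o.small.in_cong[OF this] has_asymp_fps_uptoD[OF assms(2), of K]
  show "(\<lambda>u. g u - (\<Sum>k\<le>K. F $ k * u ^ k)) \<in> o[at_right 0](\<lambda>u. u ^ K)" by simp
qed

lemma has_asymp_fps_cong:
  assumes "has_asymp_fps f F" "\<And>u. f u = g u" "F = G"
  shows "has_asymp_fps g G"
  using assms(1) unfolding assms(3)
  by (rule has_asymp_fps_eventually_cong[OF always_eventually, rotated]) (simp add: assms(2))

lemma has_asymp_fps_monom: "has_asymp_fps (\<lambda>u. c * u ^ n) (fps_const c * fps_X ^ n)"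
  unfolding has_asymp_fps_def has_asymp_fps_upto_def
proof
  fix K
  have "(\<Sum>k\<le>K. (fps_const c * fps_X ^ n) $ k * u ^ k) = (if n \<le> K then c * u ^ n else 0)"
    for u :: real
  proof -
    have "(\<Sum>k\<le>K. (fps_const c * fps_X ^ n) $ k * u ^ k) = (\<Sum>k\<le>K. if k = n then c * u ^ n else 0)"
      by (intro sum.cong) (auto simp: fps_X_power_nth)
    thus ?thesis by (simp add: sum.delta)
  qed
  moreover have "(\<lambda>u::real. c * u ^ n) \<in> o[at_right 0](\<lambda>u. u ^ K)" if "\<not> n \<le> K"
    using that by (intro power_smallo_power_at_right_0) simp
  ultimately show "(\<lambda>u. c * u ^ n - (\<Sum>k\<le>K. (fps_const c * fps_X ^ n) $ k * u ^ k))
                     \<in> o[at_right 0](\<lambda>u. u ^ K)"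
    by (cases "n \<le> K") simp_all
qed

lemma has_asymp_fps_const: "has_asymp_fps (\<lambda>u. c) (fps_const c)"
  using has_asymp_fps_monom[of c 0] by simp

lemma has_asymp_fps_X: "has_asymp_fps (\<lambda>u. u) fps_X"
  using has_asymp_fps_monom[of 1 1] by simp

lemma has_asymp_fps_add:
  assumes "has_asymp_fps f F" "has_asymp_fps g G"
  shows "has_asymp_fps (\<lambda>u. f u + g u) (F + G)"
  unfolding has_asymp_fps_def has_asymp_fps_upto_def
proof
  fix K
  have "(\<lambda>u. (f u - (\<Sum>k\<le>K. F $ k * u ^ k)) + (g u - (\<Sum>k\<le>K. G $ k * u ^ k)))
          \<in> o[at_right 0](\<lambda>u. u ^ K)"
    using assms by (intro sum_in_smallo(1) has_asymp_fps_uptoD)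
  thus "(\<lambda>u. f u + g u - (\<Sum>k\<le>K. (F + G) $ k * u ^ k)) \<in> o[at_right 0](\<lambda>u. u ^ K)"
    by (simp add: algebra_simps sum.distrib)
qed

lemma has_asymp_fps_uminus:
  assumes "has_asymp_fps f F"
  shows "has_asymp_fps (\<lambda>u. - f u) (- F)"
  unfolding has_asymp_fps_def has_asymp_fps_upto_def
proof
  fix K
  have "(\<lambda>u. - (f u - (\<Sum>k\<le>K. F $ k * u ^ k))) \<in> o[at_right 0](\<lambda>u. u ^ K)"
    using has_asymp_fps_uptoD[OF assms] by (subst landau_o.small.uminus_in_iff)
  thus "(\<lambda>u. - f u - (\<Sum>k\<le>K. (- F) $ k * u ^ k)) \<in> o[at_right 0](\<lambda>u. u ^ K)"
    by (simp add: sum_negf)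
qed

lemma has_asymp_fps_diff:
  "has_asymp_fps f F \<Longrightarrow> has_asymp_fps g G \<Longrightarrow> has_asymp_fps (\<lambda>u. f u - g u) (F - G)"
  using has_asymp_fps_add[OF _ has_asymp_fps_uminus, of f F g G] by simp

lemma has_asymp_fps_sum:
  "finite A \<Longrightarrow> (\<And>i. i \<in> A \<Longrightarrow> has_asymp_fps (f i) (F i)) \<Longrightarrow>
     has_asymp_fps (\<lambda>u. \<Sum>i\<in>A. f i u) (\<Sum>i\<in>A. F i)"
proof (induction A rule: finite_induct)
  case empty
  thus ?case using has_asymp_fps_const[of 0] by simp
next
  case (insert x A)
  thus ?case by (simp add: has_asymp_fps_add)
qed

lemma has_asymp_fps_tendsto:
  assumes "has_asymp_fps f F"
  shows "(f \<longlongrightarrow> F $ 0) (at_right 0)"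
proof -
  have "((\<lambda>u. f u - F $ 0) \<longlongrightarrow> 0) (at_right 0)"
    using smalloD_tendsto[OF has_asymp_fps_uptoD[OF assms, of 0]] by simp
  hence "((\<lambda>u. (f u - F $ 0) + F $ 0) \<longlongrightarrow> 0 + F $ 0) (at_right 0)"
    by (intro tendsto_add tendsto_const)
  thus ?thesis by simp
qed

lemma has_asymp_fps_bigo_1:
  "has_asymp_fps f F \<Longrightarrow> f \<in> O[at_right 0](\<lambda>_. 1)"
  by (intro bigoI_tendsto[where c = "F $ 0"] has_asymp_fps_tendsto) simp_all

lemma fps_truncation_mult_diff:
  fixes u :: real
  shows "(\<Sum>k\<le>K. F $ k * u ^ k) * (\<Sum>k\<le>K. G $ k * u ^ k) - (\<Sum>k\<le>K. (F * G) $ k * u ^ k) =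
    (\<Sum>i\<le>K. \<Sum>j\<le>K. if K < i + j then F $ i * G $ j * u ^ (i + j) else 0)"
proof -
  define h where "h = (\<lambda>(i, j). F $ i * G $ j * u ^ (i + j))"
  have "(\<Sum>k\<le>K. (F * G) $ k * u ^ k) = (\<Sum>k\<le>K. \<Sum>i\<le>k. h (i, k - i))"
    by (intro sum.cong) (auto simp: fps_mult_nth atLeast0AtMost sum_distrib_right h_def
        intro!: sum.cong simp flip: power_add)
  also have "\<dots> = (\<Sum>p\<in>{(i, j). i + j \<le> K}. h p)"
    using sum.triangle_reindex_eq[of "\<lambda>i j. h (i, j)" K] by (simp add: case_prod_beta')
  also have "{(i, j). i + j \<le> K} = {p \<in> {..K} \<times> {..K}. fst p + snd p \<le> K}" by auto
  also have "sum h \<dots> = (\<Sum>p\<in>{..K} \<times> {..K}. if fst p + snd p \<le> K then h p else 0)"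
    by (rule sum.inter_filter) auto
  finally have trunc: "(\<Sum>k\<le>K. (F * G) $ k * u ^ k) = \<dots>" .
  have prod: "(\<Sum>k\<le>K. F $ k * u ^ k) * (\<Sum>k\<le>K. G $ k * u ^ k) = (\<Sum>p\<in>{..K} \<times> {..K}. h p)"
    by (simp add: sum_product sum.cartesian_product h_def power_add algebra_simps case_prod_beta')
  have high: "(\<Sum>i\<le>K. \<Sum>j\<le>K. if K < i + j then F $ i * G $ j * u ^ (i + j) else 0) =
     (\<Sum>p\<in>{..K} \<times> {..K}. if K < fst p + snd p then h p else 0)"
    by (simp add: sum.cartesian_product) (intro sum.cong, auto simp: h_def)
  have "(\<Sum>p\<in>{..K} \<times> {..K}. h p) = (\<Sum>p\<in>{..K} \<times> {..K}. if fst p + snd p \<le> K then h p else 0)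
      + (\<Sum>p\<in>{..K} \<times> {..K}. if K < fst p + snd p then h p else 0)"
    by (subst sum.distrib[symmetric]) (intro sum.cong, auto)
  thus ?thesis unfolding trunc prod high by linarith
qed

lemma has_asymp_fps_mult:
  assumes f: "has_asymp_fps f F" and g: "has_asymp_fps g G"
  shows "has_asymp_fps (\<lambda>u. f u * g u) (F * G)"
  unfolding has_asymp_fps_def has_asymp_fps_upto_def
proof
  fix K
  define pF where "pF = (\<lambda>u::real. \<Sum>k\<le>K. F $ k * u ^ k)"
  define pG where "pG = (\<lambda>u::real. \<Sum>k\<le>K. G $ k * u ^ k)"
  have "has_asymp_fps pF (\<Sum>k\<le>K. fps_const (F $ k) * fps_X ^ k)"
    unfolding pF_def by (rule has_asymp_fps_sum) (auto intro: has_asymp_fps_monom)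
  hence "(\<lambda>u. pF u * (g u - pG u)) \<in> o[at_right 0](\<lambda>u. u ^ K)"
    using landau_o.big_small_mult[OF has_asymp_fps_bigo_1 has_asymp_fps_uptoD[OF g]]
    by (simp add: pG_def)
  moreover have "(\<lambda>u. (f u - pF u) * g u) \<in> o[at_right 0](\<lambda>u. u ^ K)"
    using landau_o.small_big_mult[OF has_asymp_fps_uptoD[OF f] has_asymp_fps_bigo_1[OF g]]
    by (simp add: pF_def)
  moreover have "(\<lambda>u. pF u * pG u - (\<Sum>k\<le>K. (F * G) $ k * u ^ k)) \<in> o[at_right 0](\<lambda>u. u ^ K)"
    unfolding pF_def pG_def fps_truncation_mult_diff
  proof (intro big_sum_in_smallo)
    fix i j
    show "(\<lambda>u::real. if K < i + j then F $ i * G $ j * u ^ (i + j) else 0) \<in> o[at_right 0](\<lambda>u. u ^ K)"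
      using power_smallo_power_at_right_0[of K "i + j" "F $ i * G $ j"] by (cases "K < i + j") simp_all
  qed
  ultimately have "(\<lambda>u. (f u - pF u) * g u + pF u * (g u - pG u)
                      + (pF u * pG u - (\<Sum>k\<le>K. (F * G) $ k * u ^ k))) \<in> o[at_right 0](\<lambda>u. u ^ K)"
    by (intro sum_in_smallo(1))
  thus "(\<lambda>u. f u * g u - (\<Sum>k\<le>K. (F * G) $ k * u ^ k)) \<in> o[at_right 0](\<lambda>u. u ^ K)"
    by (simp add: algebra_simps)
qed

lemma has_asymp_fps_power: "has_asymp_fps f F \<Longrightarrow> has_asymp_fps (\<lambda>u. f u ^ n) (F ^ n)"
  by (induction n) (use has_asymp_fps_const[of 1] in \<open>auto intro: has_asymp_fps_mult\<close>)

lemma has_asymp_fps_cmult: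
  "has_asymp_fps f F \<Longrightarrow> has_asymp_fps (\<lambda>u. c * f u) (fps_const c * F)"
  using has_asymp_fps_mult[OF has_asymp_fps_const] by blast

lemma has_asymp_fps_half_diff_sum:
  assumes "has_asymp_fps f (S - E)" "has_asymp_fps g (S + E)"
  shows "has_asymp_fps (\<lambda>u. (g u - f u) / 2) E" and "has_asymp_fps (\<lambda>u. (g u + f u) / 2) S"
proof -
  have "fps_const (1 / 2) * ((S + E) - (S - E)) = E" "fps_const (1 / 2) * ((S + E) + (S - E)) = S"
    by (simp_all only: fps_eq_iff fps_mult_left_const_nth fps_add_nth fps_sub_nth) simp_all
  thus "has_asymp_fps (\<lambda>u. (g u - f u) / 2) E" "has_asymp_fps (\<lambda>u. (g u + f u) / 2) S"
    by (auto intro: has_asymp_fps_cong[OF has_asymp_fps_cmult[where c = "1 / 2",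
          OF has_asymp_fps_diff[OF assms(2,1)]]]
        has_asymp_fps_cong[OF has_asymp_fps_cmult[where c = "1 / 2", OF has_asymp_fps_add[OF assms(2,1)]]])
qed

lemma has_asymp_fps_inverse:
  assumes f: "has_asymp_fps f F" and F0: "F $ 0 \<noteq> 0"
  shows "has_asymp_fps (\<lambda>u. inverse (f u)) (inverse F)"
  unfolding has_asymp_fps_def has_asymp_fps_upto_def
proof
  fix K
  define Q where "Q = (\<lambda>u::real. \<Sum>k\<le>K. inverse F $ k * u ^ k)"
  have "has_asymp_fps Q (\<Sum>k\<le>K. fps_const (inverse F $ k) * fps_X ^ k)"
    unfolding Q_def by (rule has_asymp_fps_sum) (auto intro: has_asymp_fps_monom)
  hence "has_asymp_fps_upto K (\<lambda>u. f u * Q u) (F * (\<Sum>k\<le>K. fps_const (inverse F $ k) * fps_X ^ k))"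
    using has_asymp_fps_mult[OF f] unfolding has_asymp_fps_def by blast
  moreover have "(F * (\<Sum>i\<le>K. fps_const (inverse F $ i) * fps_X ^ i)) $ k = (1 :: real fps) $ k"
    if "k \<le> K" for k
  proof -
    have "(\<Sum>i\<le>K. fps_const (inverse F $ i) * fps_X ^ i) $ j = inverse F $ j" if "j \<le> K" for j
    proof -
      have "(\<Sum>i\<le>K. fps_const (inverse F $ i) * fps_X ^ i) $ j = (\<Sum>i\<le>K. if i = j then inverse F $ i else 0)"
        unfolding fps_sum_nth by (intro sum.cong) (auto simp: fps_X_power_nth)
      thus ?thesis using that by simp
    qed
    hence "(F * (\<Sum>i\<le>K. fps_const (inverse F $ i) * fps_X ^ i)) $ k = (F * inverse F) $ k"
      unfolding fps_mult_nth using \<open>k \<le> K\<close> by (intro sum.cong) auto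
    thus ?thesis using F0 by (simp add: inverse_mult_eq_1')
  qed
  ultimately have "has_asymp_fps_upto K (\<lambda>u. f u * Q u) 1"
    by (rule has_asymp_fps_upto_cong_coeff[rotated])
  moreover have "(\<Sum>k\<le>K. (1 :: real fps) $ k * u ^ k) = 1" for u :: real
    by (induction K) simp_all
  ultimately have "(\<lambda>u. f u * Q u - 1) \<in> o[at_right 0](\<lambda>u. u ^ K)"
    unfolding has_asymp_fps_upto_def by simp
  moreover have "((\<lambda>u. inverse (f u)) \<longlongrightarrow> inverse (F $ 0)) (at_right 0)"
    using has_asymp_fps_tendsto[OF f] F0 by (intro tendsto_intros)
  hence "(\<lambda>u. inverse (f u)) \<in> O[at_right 0](\<lambda>_. 1)"
    by (intro bigoI_tendsto[where c = "inverse (F $ 0)"]) auto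
  ultimately have "(\<lambda>u. - (inverse (f u) * (f u * Q u - 1))) \<in> o[at_right 0](\<lambda>u. u ^ K)"
    using landau_o.big_small_mult by (subst landau_o.small.uminus_in_iff) fastforce
  moreover have "eventually (\<lambda>u. f u \<noteq> 0) (at_right 0)"
    using tendsto_imp_eventually_ne[OF has_asymp_fps_tendsto[OF f] F0] .
  hence "eventually (\<lambda>u. - (inverse (f u) * (f u * Q u - 1)) = inverse (f u) - Q u) (at_right 0)"
    by eventually_elim (simp add: algebra_simps)
  ultimately show "(\<lambda>u. inverse (f u) - (\<Sum>k\<le>K. inverse F $ k * u ^ k)) \<in> o[at_right 0](\<lambda>u. u ^ K)"
    using landau_o.small.in_cong unfolding Q_def by fastforce
qed

lemma has_asymp_fps_unique:
  assumes "has_asymp_fps f F" "has_asymp_fps f G"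
  shows "F = G"
proof (rule ccontr)
  assume "F \<noteq> G"
  define m where "m = (LEAST j. F $ j \<noteq> G $ j)"
  have m: "F $ m \<noteq> G $ m"
    using \<open>F \<noteq> G\<close> unfolding m_def fps_eq_iff by (metis (mono_tags) LeastI)
  have below: "F $ k = G $ k" if "k < m" for k
    using not_less_Least[OF that[unfolded m_def]] by blast
  have "(\<lambda>u. (f u - (\<Sum>k\<le>m. G $ k * u ^ k)) - (f u - (\<Sum>k\<le>m. F $ k * u ^ k)))
          \<in> o[at_right 0](\<lambda>u. u ^ m)"
    using assms by (intro sum_in_smallo(2) has_asymp_fps_uptoD)
  moreover have "(f u - (\<Sum>k\<le>m. G $ k * u ^ k)) - (f u - (\<Sum>k\<le>m. F $ k * u ^ k))
                   = (F $ m - G $ m) * u ^ m" for u :: real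
  proof -
    have "(\<Sum>k\<le>m. F $ k * u ^ k) - (\<Sum>k\<le>m. G $ k * u ^ k) = (\<Sum>k\<le>m. (F $ k - G $ k) * u ^ k)"
      by (simp add: sum_subtractf algebra_simps)
    also have "\<dots> = (\<Sum>k\<in>{m}. (F $ k - G $ k) * u ^ k)"
      by (intro sum.mono_neutral_right) (auto simp: below)
    finally show ?thesis by simp
  qed
  ultimately have "(\<lambda>u::real. u ^ m) \<in> o[at_right 0](\<lambda>u. u ^ m)"
    using m by simp
  hence "eventually (\<lambda>u::real. u ^ m = 0) (at_right 0)"
    by (simp add: landau_o.small_refl_iff)
  with eventually_power_nonzero_at_right_0[of m]
  have "eventually (\<lambda>u::real. False) (at_right 0)" by eventually_elim simp
  thus False by simp
qed

lemma has_asymp_fps_order_1: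
  assumes "has_asymp_fps w W" "W $ 0 = 0" "W $ 1 > 0"
  shows "filterlim w (at_right 0) (at_right 0)" and "w \<in> O[at_right 0](\<lambda>u. u)"
proof -
  have "(\<lambda>u. w u - W $ 1 * u) \<in> o[at_right 0](\<lambda>u. u)"
    using has_asymp_fps_uptoD[OF assms(1), of 1] assms(2) by simp
  hence "((\<lambda>u. (w u - W $ 1 * u) / u + W $ 1) \<longlongrightarrow> 0 + W $ 1) (at_right 0)"
    by (intro tendsto_add tendsto_const smalloD_tendsto)
  moreover have "eventually (\<lambda>u. (w u - W $ 1 * u) / u + W $ 1 = w u / u) (at_right 0)"
    using eventually_at_right_less[of 0] by eventually_elim (simp add: field_simps)
  ultimately have ratio: "((\<lambda>u. w u / u) \<longlongrightarrow> W $ 1) (at_right 0)"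
    using tendsto_cong by fastforce
  thus "w \<in> O[at_right 0](\<lambda>u. u)"
    by (rule bigoI_tendsto) (use eventually_at_right_less[of 0] in \<open>auto elim: eventually_mono\<close>)
  have "((\<lambda>u. w u / u * u) \<longlongrightarrow> W $ 1 * 0) (at_right 0)"
    by (intro tendsto_mult ratio) (simp add: tendsto_ident_at)
  moreover have "eventually (\<lambda>u. w u / u * u = w u) (at_right 0)"
    using eventually_at_right_less[of 0] by eventually_elim simp
  ultimately have "(w \<longlongrightarrow> 0) (at_right 0)"
    using tendsto_cong by fastforce
  moreover have "eventually (\<lambda>u. w u / u > 0) (at_right 0)"
    using order_tendstoD(1)[OF ratio assms(3)] .
  hence "eventually (\<lambda>u. w u > 0) (at_right 0)"
    using eventually_at_right_less[of 0] by eventually_elim (simp add: zero_less_divide_iff)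
  ultimately show "filterlim w (at_right 0) (at_right 0)"
    by (rule tendsto_imp_filterlim_at_right)
qed

lemma smallo_compose_order_1:
  fixes f w :: "real \<Rightarrow> real"
  assumes f: "\<And>N. (\<lambda>v. f v - (\<Sum>n\<le>N. a n * v ^ (2 * n))) \<in> o[at_right 0](\<lambda>v. v ^ (2 * N))"
    and w: "filterlim w (at_right 0) (at_right 0)" "w \<in> O[at_right 0](\<lambda>u. u)"
  shows "(\<lambda>u. f (w u) - (\<Sum>n\<le>K. a n * w u ^ (2 * n))) \<in> o[at_right 0](\<lambda>u. u ^ K)"
proof -
  have "(\<lambda>u. f (w u) - (\<Sum>n\<le>K. a n * w u ^ (2 * n))) \<in> o[at_right 0](\<lambda>u. w u ^ (2 * K))"
    by (rule landau_o.small.compose[OF f w(1)])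
  also have "(\<lambda>u. w u ^ (2 * K)) \<in> O[at_right 0](\<lambda>u. u ^ (2 * K))"
    by (rule landau_o.big_power[OF w(2)])
  finally show ?thesis
    by (rule smallo_power_mono_at_right_0[rotated]) simp
qed

section \<open>Integer powers of power series\<close>

lemma fps_deriv_power_int:
  fixes B :: "'a :: field fps"
  assumes B0: "B $ 0 \<noteq> 0"
  shows "B * fps_deriv (B powi r) = fps_const (of_int r) * B powi r * fps_deriv B"
proof (cases "r \<ge> 0")
  case True
  then obtain N where r: "r = int N" by (metis nonneg_eq_int)
  have "B * fps_deriv (B ^ N) = of_nat N * B ^ N * fps_deriv B"
  proof (cases N)
    case (Suc k)
    have "B * fps_deriv (B ^ Suc k) = of_nat (Suc k) * (B * B ^ k) * fps_deriv B"
      by (simp only: fps_deriv_power' diff_Suc_1) (simp only: ac_simps)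
    thus ?thesis using Suc by simp
  qed simp
  thus ?thesis by (simp add: r fps_of_int fps_of_nat)
next
  case False
  define M where "M = nat (- r) - 1"
  have r: "r = - int (Suc M)" using False by (simp add: M_def)
  have r_fps: "fps_const (of_int r) = - (of_nat (Suc M) :: 'a fps)"
    unfolding r by (simp only: of_int_minus of_int_of_nat_eq fps_const_neg[symmetric] fps_of_nat)
  define IB where "IB = inverse B"
  have "B * fps_deriv (IB ^ Suc M) = B * (of_nat (Suc M) * fps_deriv IB * IB ^ M)"
    by (simp only: fps_deriv_power' diff_Suc_1)
  also have "fps_deriv IB = - fps_deriv B * IB\<^sup>2"
    unfolding IB_def using B0 by (rule fps_inverse_deriv)
  also have "B * (of_nat (Suc M) * (- fps_deriv B * IB\<^sup>2) * IB ^ M)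
               = - of_nat (Suc M) * (B * IB) * IB ^ Suc M * fps_deriv B"
    by (simp add: algebra_simps power2_eq_square)
  also have "B * IB = 1"
    unfolding IB_def using B0 by (rule inverse_mult_eq_1')
  finally have "B * fps_deriv (IB ^ Suc M) = - of_nat (Suc M) * IB ^ Suc M * fps_deriv B"
    by simp
  moreover have "B powi r = IB ^ Suc M"
    by (simp add: r power_int_def IB_def del: of_nat_Suc)
  ultimately show ?thesis by (simp only: r_fps)
qed

lemma fps_power_int_nth_0: "(B powi r) $ 0 = (B $ 0 :: 'a :: field) powi r"
  by (simp add: power_int_def fps_nth_power_0)

lemma power_int_eq_powr: "(b :: real) > 0 \<Longrightarrow> b powi r = b powr of_int r"
  by (cases "r \<ge> 0")
     (simp_all add: power_int_def powr_realpow[symmetric] powr_minus power_inverse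
        flip: powr_realpow)

text \<open>Coefficient comparison in \<open>X B (B\<^sup>r)' = r B\<^sup>r X B'\<close>: this is the recursion defining \<^const>\<open>P\<close>.\<close>
lemma fps_power_int_nth_rec:
  fixes B :: "'a :: field fps"
  assumes B0: "B $ 0 \<noteq> 0"
  shows "of_nat n * B $ 0 * (B powi r) $ n =
    (\<Sum>k\<in>{1..n}. (of_nat k * (1 + of_int r) - of_nat n) * B $ k * (B powi r) $ (n - k))"
proof -
  define F where "F = B powi r"
  have XD: "(fps_X * fps_deriv G) $ j = of_nat j * G $ j" for G :: "'a fps" and j
    by (cases j) (simp_all add: algebra_simps)
  have "B * (fps_X * fps_deriv F) = fps_const (of_int r) * F * (fps_X * fps_deriv B)"
    using fps_deriv_power_int[OF B0, of r] unfolding F_def by (metis mult.assoc mult.left_commute)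
  hence "(B * (fps_X * fps_deriv F)) $ n = (fps_const (of_int r) * ((fps_X * fps_deriv B) * F)) $ n"
    by (simp only: ac_simps)
  hence "(\<Sum>k=0..n. B $ k * (of_nat (n - k) * F $ (n - k)))
           = of_int r * (\<Sum>k=0..n. of_nat k * B $ k * F $ (n - k))"
    by (simp only: fps_mult_nth[of B] fps_mult_nth[of "fps_X * fps_deriv B"] fps_mult_left_const_nth XD)
  moreover have "(\<Sum>k=0..n. B $ k * (of_nat (n - k) * F $ (n - k)))
      = of_nat n * B $ 0 * F $ n + (\<Sum>k\<in>{1..n}. B $ k * (of_nat (n - k) * F $ (n - k)))"
    by (subst sum.atLeast_Suc_atMost) auto
  moreover have "(\<Sum>k=0..n. of_nat k * B $ k * F $ (n - k))
      = (\<Sum>k\<in>{1..n}. of_nat k * B $ k * F $ (n - k))"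
    by (subst sum.atLeast_Suc_atMost) auto
  ultimately have "of_nat n * B $ 0 * F $ n
      = of_int r * (\<Sum>k\<in>{1..n}. of_nat k * B $ k * F $ (n - k))
        - (\<Sum>k\<in>{1..n}. B $ k * (of_nat (n - k) * F $ (n - k)))"
    by (simp add: eq_diff_eq)
  also have "\<dots> = (\<Sum>k\<in>{1..n}. (of_nat k * (1 + of_int r) - of_nat n) * B $ k * F $ (n - k))"
    unfolding sum_distrib_left sum_subtractf[symmetric]
    by (intro sum.cong refl) (auto simp: algebra_simps of_nat_diff)
  finally show ?thesis unfolding F_def .
qed

lemma P_eq_fps_power_int_nth:
  assumes b0: "b 0 > 0"
  shows "P n (of_int r) b = (Abs_fps b powi r) $ n"
proof (induction n rule: less_induct)
  case (less n)
  show ?case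
  proof (cases n)
    case 0
    thus ?thesis using b0 by (simp add: fps_power_int_nth_0 power_int_eq_powr)
  next
    case (Suc m)
    have "P n (of_int r) b = (1 / (real n * b 0)) *
      (\<Sum>k\<in>{1..n}. (real k * (1 + of_int r) - real n) * b k * (Abs_fps b powi r) $ (n - k))"
      using less Suc by simp
    also have "\<dots> = (1 / (real n * b 0)) * (real n * b 0 * (Abs_fps b powi r) $ n)"
      using fps_power_int_nth_rec[of "Abs_fps b" n r] b0 by simp
    also have "\<dots> = (Abs_fps b powi r) $ n"
      using b0 Suc by simp
    finally show ?thesis .
  qed
qed

section \<open>The series of a mean of two expansions\<close>

text \<open>The series \<open>D\<^sup>2\<^sup>n C\<^sup>1\<^sup>-\<^sup>2\<^sup>n\<close> of the \<open>n\<close>-th term \<open>a\<^sub>n t\<^sup>2\<^sup>n x\<^sup>1\<^sup>-\<^sup>2\<^sup>n\<close> of the expansion,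
  for \<open>t\<close> and \<open>x\<close> expanded as \<open>D\<close> and \<open>C\<close>.\<close>
definition mean_term :: "'a :: field fps \<Rightarrow> 'a fps \<Rightarrow> nat \<Rightarrow> 'a fps" where
  "mean_term D C n = D ^ (2 * n) * C * inverse C ^ (2 * n)"

text \<open>Cutting the sum at \<open>n \<le> k\<close> loses nothing when \<open>D $ 0 = 0\<close>, as \<open>D\<^sup>2\<^sup>n\<close> then has
  order \<open>2n\<close>.\<close>
definition mean_fps :: "(nat \<Rightarrow> 'a) \<Rightarrow> 'a :: field fps \<Rightarrow> 'a fps \<Rightarrow> 'a fps" where
  "mean_fps a D C = Abs_fps (\<lambda>k. \<Sum>n\<le>k. a n * mean_term D C n $ k)"

lemma mean_term_0 [simp]: "mean_term D C 0 = C"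
  by (simp add: mean_term_def)

lemma mean_term_nth_0:
  "mean_term D C n $ 0 = (D $ 0) ^ (2 * n) * C $ 0 * inverse (C $ 0) ^ (2 * n)"
  by (simp add: mean_term_def fps_nth_power_0)

lemma mean_term_eq_power_int:
  assumes "C $ 0 \<noteq> 0"
  shows "mean_term D C n = D ^ (2 * n) * C powi (1 - 2 * int n)"
proof (cases n)
  case (Suc k)
  have "C * inverse C ^ (2 * n) = (C * inverse C) * inverse C ^ (2 * k + 1)"
    using Suc by (simp add: mult_ac)
  also have "\<dots> = inverse C ^ (2 * k + 1)"
    using assms by (simp add: inverse_mult_eq_1')
  also have "\<dots> = C powi (1 - 2 * int n)"
  proof -
    have "\<not> 1 - 2 * int n \<ge> 0" and "nat (- (1 - 2 * int n)) = 2 * k + 1"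
      using Suc by simp_all
    thus ?thesis by (simp only: power_int_def if_False)
  qed
  finally have "C * inverse C ^ (2 * n) = C powi (1 - 2 * int n)" .
  thus ?thesis unfolding mean_term_def mult.assoc by (simp only:)
qed (simp add: mean_term_def)

lemma mean_term_X_mult: "mean_term (fps_X * D) C n = fps_X ^ (2 * n) * mean_term D C n"
  by (simp add: mean_term_def power_mult_distrib mult_ac)

lemma mean_term_nth_below:
  assumes "D $ 0 = 0" "k < 2 * n"
  shows "mean_term D C n $ k = 0"
proof -
  have "fps_X * fps_shift 1 D = D"
  proof (intro fps_ext)
    fix j
    show "(fps_X * fps_shift 1 D) $ j = D $ j" using assms(1) by (cases j) simp_all
  qed
  hence "mean_term D C n = fps_X ^ (2 * n) * mean_term (fps_shift 1 D) C n"
    using mean_term_X_mult[of "fps_shift 1 D" C n] by simp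
  thus ?thesis using assms(2) by (simp add: fps_X_power_mult_nth)
qed

lemma mean_term_scale:
  fixes c :: "'a :: field"
  assumes "c \<noteq> 0"
  shows "mean_term (fps_const c * D) (fps_const c * C) n = fps_const c * mean_term D C n"
proof -
  have "mean_term (fps_const c * D) (fps_const c * C) n
          = fps_const (c ^ (2 * n) * c * inverse c ^ (2 * n)) * mean_term D C n"
    by (simp add: mean_term_def power_mult_distrib fps_inverse_mult fps_const_inverse mult_ac)
  also have "c ^ (2 * n) * c * inverse c ^ (2 * n) = c"
    using assms by (simp add: power_inverse field_simps)
  finally show ?thesis .
qed

lemma mean_term_uminus [simp]: "mean_term (- D) C n = mean_term D C n"
  by (simp add: mean_term_def)

lemma mean_term_compose:
  assumes "c $ 0 = 0" "C $ 0 \<noteq> 0"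
  shows "mean_term D C n oo c = mean_term (D oo c) (C oo c) n"
  unfolding mean_term_def
  by (simp only: fps_compose_mult_distrib[OF assms(1)] fps_compose_power[OF assms(1), symmetric]
      fps_inverse_compose[OF assms])

lemma mean_fps_nth: "mean_fps a D C $ k = (\<Sum>n\<le>k. a n * mean_term D C n $ k)"
  by (simp add: mean_fps_def)

lemma mean_fps_scale:
  fixes c :: "'a :: field"
  assumes "c \<noteq> 0"
  shows "mean_fps a (fps_const c * D) (fps_const c * C) = fps_const c * mean_fps a D C"
proof (intro fps_ext)
  fix k
  show "mean_fps a (fps_const c * D) (fps_const c * C) $ k = (fps_const c * mean_fps a D C) $ k"
    unfolding mean_fps_nth mean_term_scale[OF assms] fps_mult_left_const_nth sum_distrib_left
    by (simp only: mult.left_commute)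
qed

lemma mean_fps_compose_uminus_X:
  fixes C :: "'a :: field fps"
  assumes "C $ 0 \<noteq> 0"
  shows "mean_fps a (- (D oo - fps_X)) (C oo - fps_X) = mean_fps a D C oo - fps_X"
proof -
  have "mean_term (D oo - fps_X) (C oo - fps_X) n = mean_term D C n oo - fps_X" for n
    using assms by (simp add: mean_term_compose)
  thus ?thesis
    by (intro fps_ext) (simp add: mean_fps_nth fps_compose_uminus' sum_distrib_left mult_ac)
qed

lemma mean_fps_nth_truncated:
  assumes "D $ 0 = 0" "k \<le> K"
  shows "(\<Sum>n\<le>K. fps_const (a n) * mean_term D C n) $ k = mean_fps a D C $ k"
  unfolding mean_fps_nth fps_sum_nth fps_mult_left_const_nth
  using assms by (intro sum.mono_neutral_right) (auto simp: mean_term_nth_below)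

lemma sum_P_eq_mean_term_nth:
  assumes "b 0 > 0" "c 0 > 0"
  shows "(\<Sum>k\<le>j. P k (2 * real n) b * P (j - k) (- 2 * real n + 1) c)
           = mean_term (Abs_fps b) (Abs_fps c) n $ j"
proof -
  have "P k (2 * real n) b = (Abs_fps b ^ (2 * n)) $ k" for k
  proof -
    have "P k (2 * real n) b = P k (real_of_int (int (2 * n))) b" by simp
    also have "\<dots> = (Abs_fps b powi int (2 * n)) $ k"
      using assms(1) by (rule P_eq_fps_power_int_nth)
    finally show ?thesis by (simp only: power_int_of_nat)
  qed
  moreover have "P k (- 2 * real n + 1) c = (Abs_fps c powi (1 - 2 * int n)) $ k" for k
    using P_eq_fps_power_int_nth[where b = c, OF assms(2), of k "1 - 2 * int n"] by simp
  ultimately show ?thesis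
    using assms(2) by (simp add: mean_term_eq_power_int fps_mult_nth atLeast0AtMost mult.assoc)
qed

lemma fps_compose_X_power2_nth:
  "(F oo fps_X ^ 2) $ k = (if even k then F $ (k div 2) else (0 :: 'a :: comm_ring_1))"
proof -
  have "(F oo fps_X ^ 2) $ k = (\<Sum>i=0..k. if i = k div 2 \<and> even k then F $ i else 0)"
    unfolding fps_compose_nth by (intro sum.cong) (auto simp: power_mult[symmetric])
  thus ?thesis by (simp add: sum.delta')
qed

lemma fps_compose_X_power2_uminus_X: "(F oo fps_X ^ 2) oo - fps_X = (F oo fps_X ^ 2 :: 'a :: comm_ring_1 fps)"
  by (intro fps_ext) (simp add: fps_compose_uminus' fps_compose_X_power2_nth)

lemma sum_even_truncation:
  fixes v :: "'a :: comm_ring_1"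
  shows "(\<Sum>k\<le>2 * N. (Abs_fps a oo fps_X ^ 2) $ k * v ^ k) = (\<Sum>n\<le>N. a n * v ^ (2 * n))"
  by (induction N) (simp_all add: fps_compose_X_power2_nth)

lemma mean_fps_odd_even_nth:
  fixes D S :: "'a :: field fps"
  assumes "S $ 0 \<noteq> 0"
  shows "mean_fps a (fps_X * (D oo fps_X ^ 2)) (S oo fps_X ^ 2) $ (2 * m)
           = (\<Sum>n\<le>m. a n * mean_term D S n $ (m - n))"
proof -
  have term_eq: "mean_term (fps_X * (D oo fps_X ^ 2)) (S oo fps_X ^ 2) n $ (2 * m)
                = (if m < n then 0 else mean_term D S n $ (m - n))" for n
  proof -
    have "mean_term (fps_X * (D oo fps_X ^ 2)) (S oo fps_X ^ 2) n
            = fps_X ^ (2 * n) * (mean_term D S n oo fps_X ^ 2)"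
      using assms by (simp add: mean_term_X_mult mean_term_compose)
    moreover have "2 * m - 2 * n = 2 * (m - n)" by simp
    ultimately show ?thesis
      by (simp add: fps_X_power_mult_nth fps_compose_X_power2_nth del: mult_2)
  qed
  have "mean_fps a (fps_X * (D oo fps_X ^ 2)) (S oo fps_X ^ 2) $ (2 * m)
          = (\<Sum>n\<le>2 * m. a n * (if m < n then 0 else mean_term D S n $ (m - n)))"
    by (simp add: mean_fps_nth term_eq)
  also have "\<dots> = (\<Sum>n\<le>m. a n * mean_term D S n $ (m - n))"
    by (rule sum.mono_neutral_cong_right) auto
  finally show ?thesis .
qed

section \<open>Expansion of a homogeneous mean\<close>

lemma eventually_at_right_0_unit_interval: "eventually (\<lambda>v::real. 0 < v \<and> v < 1) (at_right 0)"
proof -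
  have "eventually (\<lambda>v::real. v < 1) (at_right 0)"
    using order_tendstoD(2)[OF tendsto_ident_at[of "0::real" "{0<..}"], of 1] by simp
  with eventually_at_right_less[of 0] show ?thesis by eventually_elim simp
qed

lemma mean_self: "is_mean M \<Longrightarrow> x > 0 \<Longrightarrow> M x x = x"
  unfolding is_mean_def by (metis min.idem max.idem order.antisym)

lemma mean_pos: "is_mean M \<Longrightarrow> s > 0 \<Longrightarrow> t > 0 \<Longrightarrow> M s t > 0"
  unfolding is_mean_def by (metis min_less_iff_conj order_less_le_trans)

lemma sym_asymp_expansion_coeff_0:
  assumes mean: "is_mean M" and ex: "has_sym_asymp_expansion M a"
  shows "a 0 = 1"
proof (rule ccontr)
  assume "a 0 \<noteq> 1"
  have "(\<lambda>x. M (x - 0) (x + 0) - (\<Sum>n\<le>0. a n * 0 ^ (2 * n) * x powr (1 - 2 * real n)))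
          \<in> o[at_top](\<lambda>x. x powr (1 - 2 * real 0))"
    using ex unfolding has_sym_asymp_expansion_def by blast
  moreover have "eventually (\<lambda>x. M (x - 0) (x + 0) - (\<Sum>n\<le>0. a n * 0 ^ (2 * n) * x powr (1 - 2 * real n))
                   = (1 - a 0) * x) at_top"
    using eventually_gt_at_top[of 0] by eventually_elim (simp add: mean_self[OF mean] algebra_simps)
  moreover have "eventually (\<lambda>x::real. x powr (1 - 2 * real 0) = x) at_top"
    using eventually_gt_at_top[of 0] by eventually_elim simp
  ultimately have "(\<lambda>x::real. (1 - a 0) * x) \<in> o[at_top](\<lambda>x. x)"
    using landau_o.small.in_cong landau_o.small.cong by fastforce
  hence "eventually (\<lambda>x::real. x = 0) at_top"
    using \<open>a 0 \<noteq> 1\<close> by (simp add: landau_o.small_refl_iff)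
  with eventually_gt_at_top[of 0] have "eventually (\<lambda>x::real. False) at_top"
    by eventually_elim simp
  thus False by simp
qed

text \<open>Homogeneity turns the expansion of \<open>M(x - 1, x + 1)\<close> at infinity into one of
  \<open>M(1 - v, 1 + v) = v M(1/v - 1, 1/v + 1)\<close> at \<open>0\<^sup>+\<close>.\<close>
lemma sym_asymp_expansion_at_right_0:
  assumes hom: "homogeneous_mean M" and ex: "has_sym_asymp_expansion M a"
  shows "(\<lambda>v. M (1 - v) (1 + v) - (\<Sum>n\<le>N. a n * v ^ (2 * n))) \<in> o[at_right 0](\<lambda>v. v ^ (2 * N))"
proof -
  define g where "g = (\<lambda>x. M (x - 1) (x + 1) - (\<Sum>n\<le>N. a n * 1 ^ (2 * n) * x powr (1 - 2 * real n)))"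
  have "g \<in> o[at_top](\<lambda>x. x powr (1 - 2 * real N))"
    using ex unfolding has_sym_asymp_expansion_def g_def by blast
  hence "(\<lambda>v. v * g (inverse v)) \<in> o[at_right 0](\<lambda>v. v * inverse v powr (1 - 2 * real N))"
    by (intro landau_o.small.mult_left landau_o.small.compose[OF _ filterlim_inverse_at_top_right])
  moreover have inv_powr: "v * inverse v powr (1 - 2 * real n) = v ^ (2 * n)" if "v > 0" for v :: real and n
    using that by (simp add: powr_diff powr_minus inverse_powr divide_inverse powr_realpow[symmetric]
      flip: powr_add)
  have "eventually (\<lambda>v. v * inverse v powr (1 - 2 * real N) = v ^ (2 * N)) (at_right 0)"
    using eventually_at_right_less[of 0] by eventually_elim (rule inv_powr)
  moreover from eventually_at_right_0_unit_interval
  have "eventually (\<lambda>v. v * g (inverse v) = M (1 - v) (1 + v) - (\<Sum>n\<le>N. a n * v ^ (2 * n))) (at_right 0)"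
  proof eventually_elim
    case (elim v)
    have "v * M (inverse v - 1) (inverse v + 1) = M (v * (inverse v - 1)) (v * (inverse v + 1))"
      using hom elim unfolding homogeneous_mean_def by (simp add: one_less_inverse add_pos_pos)
    also have "\<dots> = M (1 - v) (1 + v)"
      using elim by (simp add: algebra_simps)
    moreover have "v * (\<Sum>n\<le>N. a n * 1 ^ (2 * n) * inverse v powr (1 - 2 * real n))
                     = (\<Sum>n\<le>N. a n * v ^ (2 * n))"
      unfolding sum_distrib_left
      by (intro sum.cong refl) (use inv_powr[of v] elim in \<open>simp add: mult_ac\<close>)
    ultimately show ?case
      unfolding g_def by (simp add: right_diff_distrib)
  qed
  ultimately show ?thesis
    using landau_o.small.in_cong landau_o.small.cong by fastforce
qed

lemma has_asymp_fps_mean_1_pm: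
  assumes "homogeneous_mean M" "has_sym_asymp_expansion M a"
  shows "has_asymp_fps (\<lambda>v. M (1 - v) (1 + v)) (Abs_fps a oo fps_X ^ 2)"
  unfolding has_asymp_fps_def
proof
  fix K
  have "has_asymp_fps_upto (2 * K) (\<lambda>v. M (1 - v) (1 + v)) (Abs_fps a oo fps_X ^ 2)"
    unfolding has_asymp_fps_upto_def sum_even_truncation
    using sym_asymp_expansion_at_right_0[OF assms] .
  thus "has_asymp_fps_upto K (\<lambda>v. M (1 - v) (1 + v)) (Abs_fps a oo fps_X ^ 2)"
    by (rule has_asymp_fps_upto_mono) simp
qed

lemma homogeneous_mean_rescale:
  assumes "homogeneous_mean M" "p > 0" "q > 0" "c > 0" "p = c * (1 - w)" "q = c * (1 + w)"
  shows "M p q = c * M (1 - w) (1 + w)"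
proof -
  have "1 - w > 0" "1 + w > 0"
    using assms(2-6) by (metis zero_less_mult_pos)+
  thus ?thesis
    using assms(1,4) unfolding homogeneous_mean_def assms(5,6) by blast
qed

text \<open>With \<open>c = (p + q)/2\<close> and \<open>w = (q - p)/(q + p)\<close>, homogeneity gives
  \<open>M(p, q) = c M(1 - w, 1 + w) \<approx> \<Sum> a\<^sub>n c w\<^sup>2\<^sup>n\<close>; the hypotheses on \<open>D\<close> make \<open>w\<close> a
  positive \<open>O(u)\<close>.\<close>
lemma has_asymp_fps_mean_compose:
  assumes hom: "homogeneous_mean M" and ex: "has_sym_asymp_expansion M a"
    and pos: "eventually (\<lambda>u. p u > 0 \<and> q u > 0) (at_right 0)"
    and D: "has_asymp_fps (\<lambda>u. (q u - p u) / 2) D" and C: "has_asymp_fps (\<lambda>u. (q u + p u) / 2) C"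
    and D0: "D $ 0 = 0" and D1: "D $ 1 > 0" and C0: "C $ 0 > 0"
  shows "has_asymp_fps (\<lambda>u. M (p u) (q u)) (mean_fps a D C)"
  unfolding has_asymp_fps_def
proof
  fix K
  define d where "d = (\<lambda>u. (q u - p u) / 2)"
  define c where "c = (\<lambda>u. (q u + p u) / 2)"
  define w where "w = (\<lambda>u. d u * inverse (c u))"
  define s where "s = (\<lambda>u. \<Sum>n\<le>K. a n * (d u ^ (2 * n) * c u * inverse (c u) ^ (2 * n)))"
  have "has_asymp_fps w (D * inverse C)"
    unfolding w_def d_def c_def using D C C0 by (intro has_asymp_fps_mult has_asymp_fps_inverse) auto
  moreover have "(D * inverse C) $ 1 > 0"
    using D0 D1 C0 by (simp add: fps_mult_nth)
  ultimately have w: "filterlim w (at_right 0) (at_right 0)" "w \<in> O[at_right 0](\<lambda>u. u)"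
    using has_asymp_fps_order_1[of w "D * inverse C"] D0 by simp_all
  have "(\<lambda>u. c u * (M (1 - w u) (1 + w u) - (\<Sum>n\<le>K. a n * w u ^ (2 * n)))) \<in> o[at_right 0](\<lambda>u. u ^ K)"
    using landau_o.big_small_mult[OF has_asymp_fps_bigo_1[OF C]
        smallo_compose_order_1[OF sym_asymp_expansion_at_right_0[OF hom ex] w]]
    by (simp add: c_def)
  moreover have "eventually (\<lambda>u. c u * (M (1 - w u) (1 + w u) - (\<Sum>n\<le>K. a n * w u ^ (2 * n)))
                   = M (p u) (q u) - s u) (at_right 0)"
    using pos
  proof eventually_elim
    case (elim u)
    hence "c u > 0" by (simp add: c_def)
    hence "M (p u) (q u) = c u * M (1 - w u) (1 + w u)"
      using elim by (intro homogeneous_mean_rescale[OF hom]) (simp_all add: w_def c_def d_def field_simps)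
    moreover have "c u * (\<Sum>n\<le>K. a n * w u ^ (2 * n)) = s u"
      unfolding s_def w_def sum_distrib_left
      by (intro sum.cong refl) (simp add: power_mult_distrib mult_ac)
    ultimately show ?case by (simp add: right_diff_distrib)
  qed
  ultimately have "(\<lambda>u. M (p u) (q u) - s u) \<in> o[at_right 0](\<lambda>u. u ^ K)"
    using landau_o.small.in_cong by fastforce
  moreover have "has_asymp_fps s (\<Sum>n\<le>K. fps_const (a n) * mean_term D C n)"
    unfolding s_def mean_term_def d_def c_def using C0 D C
    by (intro has_asymp_fps_sum has_asymp_fps_cmult has_asymp_fps_mult has_asymp_fps_power
        has_asymp_fps_inverse) auto
  ultimately have "has_asymp_fps_upto K (\<lambda>u. M (p u) (q u)) (\<Sum>n\<le>K. fps_const (a n) * mean_term D C n)"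
    unfolding has_asymp_fps_upto_def by (auto dest: has_asymp_fps_uptoD sum_in_smallo(1))
  thus "has_asymp_fps_upto K (\<lambda>u. M (p u) (q u)) (mean_fps a D C)"
    by (rule has_asymp_fps_upto_cong_coeff[rotated]) (simp add: mean_fps_nth_truncated D0)
qed

section \<open>Stability\<close>

lemma sum_P_seq_g_seq_h:
  "(\<Sum>k\<le>j. P k (2 * real n) (seq_g a) * P (j - k) (- 2 * real n + 1) (seq_h a))
     = mean_term (Abs_fps (seq_g a)) (Abs_fps (seq_h a)) n $ j"
  by (rule sum_P_eq_mean_term_nth) (simp_all add: seq_g_def seq_h_def)

lemma seq_s_eq_mean_term:
  "seq_s a m = 1 / 2 * (\<Sum>n\<le>m. a n * mean_term (Abs_fps (seq_g a)) (Abs_fps (seq_h a)) n $ (2 * m - 2 * n))"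
  unfolding seq_s_def sum_P_seq_g_seq_h ..

lemma seq_d_eq_mean_term:
  "seq_d a m = - 1 / 2 * (\<Sum>n\<le>m. a n * mean_term (Abs_fps (seq_g a)) (Abs_fps (seq_h a)) n $ (2 * m + 1 - 2 * n))"
  unfolding seq_d_def sum_P_seq_g_seq_h by simp

lemma seq_s_0: "a 0 = 1 \<Longrightarrow> seq_s a 0 = 1"
  by (simp add: seq_s_eq_mean_term seq_h_def)

lemma seq_d_0: "a 0 = 1 \<Longrightarrow> seq_d a 0 = 1 / 2"
  by (simp add: seq_d_eq_mean_term seq_h_def)

lemma fps_X_mult_seq_g: "a 0 = 1 \<Longrightarrow> fps_X * Abs_fps (seq_g a) = fps_X + (Abs_fps a oo fps_X ^ 2) - 1"
proof (intro fps_ext)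
  fix n
  assume "a 0 = 1"
  thus "(fps_X * Abs_fps (seq_g a)) $ n = (fps_X + (Abs_fps a oo fps_X ^ 2) - 1) $ n"
    by (cases n) (auto simp: seq_g_def fps_compose_X_power2_nth elim: oddE)
qed

lemma Abs_fps_seq_h: "a 0 = 1 \<Longrightarrow> Abs_fps (seq_h a) = 1 - fps_X + (Abs_fps a oo fps_X ^ 2)"
  by (intro fps_ext) (auto simp: seq_h_def fps_compose_X_power2_nth)

text \<open>The expansion of the inner mean \<open>M(1 - u, M(1 - u, 1 + u))\<close> of the stability identity;
  its even and odd parts are the sequences \<^const>\<open>seq_s\<close> and \<^const>\<open>seq_d\<close>.\<close>
definition stable_inner_fps :: "(nat \<Rightarrow> real) \<Rightarrow> real fps" where
  "stable_inner_fps a = fps_const (1 / 2) * mean_fps a (fps_X * Abs_fps (seq_g a)) (Abs_fps (seq_h a))"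

lemma stable_inner_fps_eq:
  "stable_inner_fps a = (Abs_fps (seq_s a) oo fps_X ^ 2) - fps_X * (Abs_fps (seq_d a) oo fps_X ^ 2)"
proof (intro fps_ext)
  fix k
  define T where "T = mean_term (Abs_fps (seq_g a)) (Abs_fps (seq_h a))"
  have "stable_inner_fps a $ k = 1 / 2 * (\<Sum>n\<le>k div 2. a n * T n $ (k - 2 * n))"
    unfolding stable_inner_fps_def fps_mult_left_const_nth mean_fps_nth mean_term_X_mult T_def
    by (intro arg_cong2[where f = "(*)"] sum.mono_neutral_cong_right)
       (auto simp: fps_X_power_mult_nth)
  moreover have "k div 2 * 2 = k - 1" if "odd k"
    using that by (auto elim: oddE)
  ultimately show "stable_inner_fps a $ k
      = ((Abs_fps (seq_s a) oo fps_X ^ 2) - fps_X * (Abs_fps (seq_d a) oo fps_X ^ 2)) $ k"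
    by (cases k)
       (auto simp: seq_s_eq_mean_term seq_d_eq_mean_term T_def fps_compose_X_power2_nth
         mult_ac elim!: evenE oddE)
qed

lemma stable_inner_fps_compose_uminus_X:
  "stable_inner_fps a oo - fps_X = (Abs_fps (seq_s a) oo fps_X ^ 2) + fps_X * (Abs_fps (seq_d a) oo fps_X ^ 2)"
  by (simp add: stable_inner_fps_eq fps_compose_sub_distrib fps_compose_mult_distrib
      fps_compose_X_power2_uminus_X)

lemma has_asymp_fps_stable_inner_left:
  assumes mean: "is_mean M" and hom: "homogeneous_mean M"
    and ex: "has_sym_asymp_expansion M a" and a0: "a 0 = 1"
  shows "has_asymp_fps (\<lambda>u. M (1 - u) (M (1 - u) (1 + u))) (stable_inner_fps a)"
proof -
  note A = has_asymp_fps_mean_1_pm[OF hom ex]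
  have "has_asymp_fps (\<lambda>u. (M (1 - u) (1 + u) - (1 - u)) / 2)
          (fps_const (1 / 2) * (fps_X * Abs_fps (seq_g a)))"
    by (rule has_asymp_fps_cong[OF has_asymp_fps_cmult[where c = "1 / 2", OF has_asymp_fps_diff[OF
          has_asymp_fps_add[OF has_asymp_fps_X A] has_asymp_fps_const[of 1]]]])
       (simp_all add: fps_X_mult_seq_g[of a, OF a0] field_simps)
  moreover have "has_asymp_fps (\<lambda>u. (M (1 - u) (1 + u) + (1 - u)) / 2)
          (fps_const (1 / 2) * Abs_fps (seq_h a))"
    by (rule has_asymp_fps_cong[OF has_asymp_fps_cmult[where c = "1 / 2", OF has_asymp_fps_add[OF
          has_asymp_fps_diff[OF has_asymp_fps_const[of 1] has_asymp_fps_X] A]]])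
       (simp_all add: Abs_fps_seq_h[of a, OF a0] field_simps)
  moreover have "eventually (\<lambda>u. 1 - u > 0 \<and> M (1 - u) (1 + u) > 0) (at_right 0)"
    using eventually_at_right_0_unit_interval by eventually_elim (simp add: mean_pos[OF mean])
  ultimately have "has_asymp_fps (\<lambda>u. M (1 - u) (M (1 - u) (1 + u)))
      (mean_fps a (fps_const (1 / 2) * (fps_X * Abs_fps (seq_g a))) (fps_const (1 / 2) * Abs_fps (seq_h a)))"
    by (intro has_asymp_fps_mean_compose[OF hom ex]) (simp_all add: seq_g_def seq_h_def)
  thus ?thesis unfolding stable_inner_fps_def by (simp add: mean_fps_scale)
qed

lemma has_asymp_fps_stable_inner_right:
  assumes mean: "is_mean M" and hom: "homogeneous_mean M"
    and ex: "has_sym_asymp_expansion M a" and a0: "a 0 = 1"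
  shows "has_asymp_fps (\<lambda>u. M (M (1 - u) (1 + u)) (1 + u)) (stable_inner_fps a oo - fps_X)"
proof -
  note A = has_asymp_fps_mean_1_pm[OF hom ex]
  have "has_asymp_fps (\<lambda>u. ((1 + u) - M (1 - u) (1 + u)) / 2)
          (fps_const (1 / 2) * - ((fps_X * Abs_fps (seq_g a)) oo - fps_X))"
    by (rule has_asymp_fps_cong[OF has_asymp_fps_cmult[where c = "1 / 2", OF has_asymp_fps_diff[OF
          has_asymp_fps_add[OF has_asymp_fps_const[of 1] has_asymp_fps_X] A]]])
       (simp_all add: fps_X_mult_seq_g[of a, OF a0] fps_compose_add_distrib fps_compose_sub_distrib
         fps_compose_X_power2_uminus_X field_simps)
  moreover have "has_asymp_fps (\<lambda>u. ((1 + u) + M (1 - u) (1 + u)) / 2)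
          (fps_const (1 / 2) * (Abs_fps (seq_h a) oo - fps_X))"
    by (rule has_asymp_fps_cong[OF has_asymp_fps_cmult[where c = "1 / 2", OF has_asymp_fps_add[OF
          has_asymp_fps_add[OF has_asymp_fps_const[of 1] has_asymp_fps_X] A]]])
       (simp_all add: Abs_fps_seq_h[of a, OF a0] fps_compose_add_distrib fps_compose_sub_distrib
         fps_compose_X_power2_uminus_X field_simps)
  moreover have "eventually (\<lambda>u. M (1 - u) (1 + u) > 0 \<and> 1 + u > 0) (at_right 0)"
    using eventually_at_right_0_unit_interval by eventually_elim (simp add: mean_pos[OF mean])
  ultimately have "has_asymp_fps (\<lambda>u. M (M (1 - u) (1 + u)) (1 + u))
      (mean_fps a (fps_const (1 / 2) * - ((fps_X * Abs_fps (seq_g a)) oo - fps_X))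
                  (fps_const (1 / 2) * (Abs_fps (seq_h a) oo - fps_X)))"
    by (intro has_asymp_fps_mean_compose[OF hom ex]) (simp_all add: seq_g_def seq_h_def fps_compose_uminus')
  also have "\<dots> = fps_const (1 / 2) * mean_fps a (- ((fps_X * Abs_fps (seq_g a)) oo - fps_X))
                                              (Abs_fps (seq_h a) oo - fps_X)"
    by (rule mean_fps_scale) simp
  also have "mean_fps a (- ((fps_X * Abs_fps (seq_g a)) oo - fps_X)) (Abs_fps (seq_h a) oo - fps_X)
               = mean_fps a (fps_X * Abs_fps (seq_g a)) (Abs_fps (seq_h a)) oo - fps_X"
    by (rule mean_fps_compose_uminus_X) (simp add: seq_h_def)
  also have "fps_const (1 / 2) * \<dots> = stable_inner_fps a oo - fps_X"
    unfolding stable_inner_fps_def by (rule fps_const_mult_apply_left)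
  finally show ?thesis .
qed

text \<open>Stability equates \<open>M(1 - u, 1 + u)\<close> with the mean of the two inner means, whose
  half-difference and half-sum expand as \<open>X D(X\<^sup>2)\<close> and \<open>S(X\<^sup>2)\<close>.\<close>
lemma stable_mean_coeff_eq:
  assumes mean: "is_mean M" and hom: "homogeneous_mean M" and stab: "stable_mean M"
    and ex: "has_sym_asymp_expansion M a" and a0: "a 0 = 1"
  shows "a m = (\<Sum>n\<le>m. a n * mean_term (Abs_fps (seq_d a)) (Abs_fps (seq_s a)) n $ (m - n))"
proof -
  define Dd where "Dd = Abs_fps (seq_d a) oo fps_X ^ 2"
  define S where "S = Abs_fps (seq_s a) oo fps_X ^ 2"
  define I1 where "I1 = (\<lambda>u. M (1 - u) (M (1 - u) (1 + u)))"
  define I2 where "I2 = (\<lambda>u. M (M (1 - u) (1 + u)) (1 + u))"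
  have "has_asymp_fps I1 (S - fps_X * Dd)"
    using has_asymp_fps_stable_inner_left[OF mean hom ex a0]
    unfolding I1_def S_def Dd_def stable_inner_fps_eq .
  moreover have "has_asymp_fps I2 (S + fps_X * Dd)"
    using has_asymp_fps_stable_inner_right[OF mean hom ex a0]
    unfolding I2_def S_def Dd_def stable_inner_fps_compose_uminus_X .
  moreover have "eventually (\<lambda>u. I1 u > 0 \<and> I2 u > 0) (at_right 0)"
    using eventually_at_right_0_unit_interval
    by eventually_elim (simp add: I1_def I2_def mean_pos[OF mean])
  ultimately have "has_asymp_fps (\<lambda>u. M (I1 u) (I2 u)) (mean_fps a (fps_X * Dd) S)"
    by (intro has_asymp_fps_mean_compose[OF hom ex] has_asymp_fps_half_diff_sum)
       (simp_all add: Dd_def S_def fps_compose_X_power2_nth seq_d_0 seq_s_0 a0)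
  moreover have "eventually (\<lambda>u. M (I1 u) (I2 u) = M (1 - u) (1 + u)) (at_right 0)"
    using eventually_at_right_0_unit_interval
    by eventually_elim (use stab in \<open>simp add: stable_mean_def I1_def I2_def\<close>)
  ultimately have "has_asymp_fps (\<lambda>u. M (1 - u) (1 + u)) (mean_fps a (fps_X * Dd) S)"
    by (rule has_asymp_fps_eventually_cong[rotated])
  hence "Abs_fps a oo fps_X ^ 2 = mean_fps a (fps_X * Dd) S"
    by (rule has_asymp_fps_unique[OF has_asymp_fps_mean_1_pm[OF hom ex]])
  moreover have "(Abs_fps a oo fps_X ^ 2) $ (2 * m) = a m"
    by (simp add: fps_compose_X_power2_nth)
  ultimately have "a m = mean_fps a (fps_X * Dd) S $ (2 * m)"
    by simp
  thus ?thesis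
    unfolding Dd_def S_def by (simp add: mean_fps_odd_even_nth seq_s_0 a0)
qed

lemma sum_P_seq_d_seq_s:
  assumes "a 0 = 1"
  shows "(\<Sum>k\<le>j. P k (2 * real n) (seq_d a) * P (j - k) (- 2 * real n + 1) (seq_s a))
           = mean_term (Abs_fps (seq_d a)) (Abs_fps (seq_s a)) n $ j"
  using assms by (intro sum_P_eq_mean_term_nth) (simp_all add: seq_d_0 seq_s_0)

lemma sum_atMost_split_ends:
  fixes m :: nat
  assumes "m \<ge> 1"
  shows "(\<Sum>n\<le>m. f n) = f 0 + (\<Sum>n\<in>{1..m-1}. f n) + (f m :: 'a :: comm_monoid_add)"
proof -
  have "(\<Sum>n\<le>m. f n) = f 0 + (\<Sum>n\<in>{Suc 0..m}. f n)"
    by (simp add: atLeast0AtMost[symmetric] sum.atLeast_Suc_atMost)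
  also have "{Suc 0..m} = insert m {1..m-1}" using assms by auto
  finally show ?thesis using assms by (simp add: add_ac)
qed

lemma coeff_recursion_solve:
  fixes x s X1 X2 :: real
  assumes m: "m \<ge> 2"
    and x: "x = s + X2 + x / 2 ^ (2 * m)" and s: "s = (x + X1 + 2 * x / 2 ^ (2 * m)) / 2"
  shows "x = 2 ^ (2 * m - 1) / (2 ^ (2 * m - 2) - 1) * (1 / 2 * X1 + X2)"
proof -
  define y :: real where "y = 2 ^ (2 * m - 2)"
  have "y > 1" using m unfolding y_def by (intro one_less_power) auto
  from m have e: "2 * m = (2 * m - 2) + 2" "2 * m - 1 = Suc (2 * m - 2)"
    by simp_all
  have pow_2m: "(2 :: real) ^ (2 * m) = 4 * y"
    unfolding y_def by (subst e(1)) (simp add: power_add)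
  have pow_2m_1: "(2 :: real) ^ (2 * m - 1) = 2 * y"
    unfolding y_def by (subst e(2)) simp
  from x s have "x * (y - 1) = y * X1 + 2 * y * X2"
    unfolding pow_2m using \<open>y > 1\<close> by (simp add: field_simps)
  thus ?thesis
    using \<open>y > 1\<close> unfolding pow_2m_1 y_def[symmetric] by (simp add: field_simps)
qed

lemma sym_asymp_expansion_coeff_recursion:
  assumes mean: "is_mean M" and hom: "homogeneous_mean M" and stab: "stable_mean M"
    and ex: "has_sym_asymp_expansion M a" and m: "m \<ge> 2"
  shows "a m = 2 ^ (2 * m - 1) / (2 ^ (2 * m - 2) - 1) *
    (1 / 2 * (\<Sum>n\<in>{1..m-1}. a n * mean_term (Abs_fps (seq_g a)) (Abs_fps (seq_h a)) n $ (2 * m - 2 * n))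
     + (\<Sum>n\<in>{1..m-1}. a n * mean_term (Abs_fps (seq_d a)) (Abs_fps (seq_s a)) n $ (m - n)))"
proof (rule coeff_recursion_solve[OF m])
  define G H Dd S where "G = Abs_fps (seq_g a)" and "H = Abs_fps (seq_h a)"
    and "Dd = Abs_fps (seq_d a)" and "S = Abs_fps (seq_s a)"
  have a0: "a 0 = 1" by (rule sym_asymp_expansion_coeff_0[OF mean ex])
  have "a m = (\<Sum>n\<le>m. a n * mean_term Dd S n $ (m - n))"
    unfolding Dd_def S_def by (rule stable_mean_coeff_eq[OF mean hom stab ex a0])
  also have "\<dots> = a 0 * mean_term Dd S 0 $ m + (\<Sum>n\<in>{1..m-1}. a n * mean_term Dd S n $ (m - n))
                   + a m * mean_term Dd S m $ 0"
    using m sum_atMost_split_ends[of m "\<lambda>n. a n * mean_term Dd S n $ (m - n)"] by simp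
  also have "a 0 * mean_term Dd S 0 $ m = seq_s a m"
    by (simp add: a0 S_def)
  also have "a m * mean_term Dd S m $ 0 = a m / 2 ^ (2 * m)"
    by (simp add: mean_term_nth_0 Dd_def S_def seq_d_0 seq_s_0 a0 power_one_over)
  finally show "a m = seq_s a m + (\<Sum>n\<in>{1..m-1}. a n * mean_term Dd S n $ (m - n)) + a m / 2 ^ (2 * m)"
    unfolding Dd_def S_def .
  have "seq_s a m = 1 / 2 * (\<Sum>n\<le>m. a n * mean_term G H n $ (2 * m - 2 * n))"
    unfolding G_def H_def by (rule seq_s_eq_mean_term)
  also have "(\<Sum>n\<le>m. a n * mean_term G H n $ (2 * m - 2 * n))
               = a 0 * mean_term G H 0 $ (2 * m) + (\<Sum>n\<in>{1..m-1}. a n * mean_term G H n $ (2 * m - 2 * n))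
                 + a m * mean_term G H m $ 0"
    using m sum_atMost_split_ends[of m "\<lambda>n. a n * mean_term G H n $ (2 * m - 2 * n)"] by simp
  also have "a 0 * mean_term G H 0 $ (2 * m) = a m"
    using m by (simp add: a0 H_def seq_h_def)
  also have "a m * mean_term G H m $ 0 = 2 * a m / 2 ^ (2 * m)"
    by (simp add: mean_term_nth_0 G_def H_def seq_g_def seq_h_def power_one_over)
  finally show "seq_s a m = (a m + (\<Sum>n\<in>{1..m-1}. a n * mean_term G H n $ (2 * m - 2 * n))
      + 2 * a m / 2 ^ (2 * m)) / 2"
    unfolding G_def H_def by simp
qed

theorem theorem3p2:
  fixes M :: "real \<Rightarrow> real \<Rightarrow> real" and a :: "nat \<Rightarrow> real"
  assumes "is_mean M" and "symmetric_mean M" and "homogeneous_mean M" and "stable_mean M"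
    and "has_sym_asymp_expansion M a"
  shows "a 0 = 1 \<and>
    (\<forall>m\<ge>2. a m = 2 ^ (2*m - 1) / (2 ^ (2*m - 2) - 1) *
       ((1/2) * (\<Sum>n\<in>{1..m-1}. a n * (\<Sum>k\<le>2*m-2*n.
            P k (2 * real n) (seq_g a) * P (2*m-2*n-k) (- 2 * real n + 1) (seq_h a)))
        + (\<Sum>n\<in>{1..m-1}. a n * (\<Sum>k\<le>m-n.
            P k (2 * real n) (seq_d a) * P (m-n-k) (- 2 * real n + 1) (seq_s a)))))"
proof
  show a0: "a 0 = 1"
    using assms(1,5) by (rule sym_asymp_expansion_coeff_0)
  show "\<forall>m\<ge>2. a m = 2 ^ (2*m - 1) / (2 ^ (2*m - 2) - 1) *
       ((1/2) * (\<Sum>n\<in>{1..m-1}. a n * (\<Sum>k\<le>2*m-2*n.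
            P k (2 * real n) (seq_g a) * P (2*m-2*n-k) (- 2 * real n + 1) (seq_h a)))
        + (\<Sum>n\<in>{1..m-1}. a n * (\<Sum>k\<le>m-n.
            P k (2 * real n) (seq_d a) * P (m-n-k) (- 2 * real n + 1) (seq_s a))))"
    unfolding sum_P_seq_g_seq_h sum_P_seq_d_seq_s[where a = a, OF a0]
    using sym_asymp_expansion_coeff_recursion[OF assms(1,3,4,5)] by blast
qed

end
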